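(* Let $d,n\ge 1$, $\gamma\in[0,1)$, $\alpha>0$, and $D=3d+2$. Let $\mathbf P,\mathbf V\in\mathbb R^{D\times D}$ be partitioned as $\mathbf P=\begin{bmatrix}\mathbf P_{11}&\mathbf P_{12}\\ \mathbf P_{21}&\mathbf P_{22}\end{bmatrix}$, $\mathbf V=\begin{bmatrix}\mathbf V_{11}&\mathbf V_{12}\\ \mathbf V_{21}&\mathbf V_{22}\end{bmatrix}$ with $\mathbf P_{11},\mathbf V_{11}\in\mathbb R^{(2d+1)\times(2d+1)}$, $\mathbf P_{12},\mathbf V_{12}\in\mathbb R^{(2d+1)\times(d+1)}$, $\mathbf P_{21},\mathbf V_{21}\in\mathbb R^{(d+1)\times(2d+1)}$, $\mathbf P_{22},\mathbf V_{22}\in\mathbb R^{(d+1)\times(d+1)}$, and suppose $$\mathbf P_{12}=\begin{bmatrix}\mathbf 0_{d\times1}&-\mathbf I_d\\ \mathbf 0_{d\times1}&\mathbf I_d\\ 1&\mathbf 0_{1\times d}\end{bmatrix},\quad \mathbf P_{22}=\mathbf 0,$$ the last $d$ rows of $\mathbf V_{21}$ equal $[\alpha\mathbf I_d\;\;\mathbf 0_{d\times d}\;\;\mathbf 0_{d\times1}]$, and the last $d$ rows of $\mathbf V_{22}$ are zero, while $\mathbf P_{11},\mathbf P_{21},\mathbf V_{11},\mathbf V_{12}$ and the first rows of $\mathbf V_{21},\mathbf V_{22}$ are arbitrary. Then for every $c\neq 0$ and every sample $z$ (any feature map, any $\mathbf w\in\mathbb R^d$, any $n$-step trajectory), the transformer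 with parameters $(c\mathbf P,c^{-1}\mathbf V)$ satisfies $\mathsf{TF}_{(c\mathbf P,c^{-1}\mathbf V)}(\mathbf H(z))=\mathbf w_{\mathrm{SARSA}}(z)$.
   Context: A linear self-attention block with parameters $(\mathbf P,\mathbf V)$, $\mathbf P,\mathbf V\in\mathbb R^{D\times D}$, maps an input $\mathbf H\in\mathbb R^{D\times N}$ to $\mathbf H_{\mathrm{out}}=\mathbf H+\frac1n(\mathbf V\mathbf H)(\mathbf H^\top\mathbf P\mathbf H)$, where $n$ is the trajectory length below; the transformer output $\mathsf{TF}_{(\mathbf P,\mathbf V)}(\mathbf H)$ is the vector of the last $d$ entries of the last column of $\mathbf H_{\mathrm{out}}$. A sample $z$ consists of a feature map $\boldsymbol\phi:\mathcal S\times\mathcal A\to\mathbb R^d$, a parameter $\mathbf w\in\mathbb R^d$, and an $n$-step trajectory $(s_0,a_0,r_1,s_1,a_1,\dots,r_n,s_n,a_n)$ with real rewards. Set $\boldsymbol\phi_i=\boldsymbol\phi(s_i,a_i)$, $\boldsymbol\phi_i^+=\boldsymbol\phi(s_{i+1},a_{i+1})$, $\delta_i=r_{i+1}+\gamma\mathbf w^\top\boldsymbol\phi_i^+-\mathbf w^\top\boldsymbol\phi_i$, $\mathbf x_i=[\boldsymbol\phi_i;\gamma\boldsymbol\phi_i^+;r_{i+1}]\in\mathbb R^{2d+1}$ for $i=0,\dots,n-1$, and $\tilde{\mathbf w}=[1;\mathbf w]\in\mathbb R^{d+1}$. The prompt is $\mathbf H(z)=\begin{bmatrix}\mathbf x_0&\cdots&\mathbf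 x_{n-1}&\mathbf 0\\ \mathbf 0&\cdots&\mathbf 0&\tilde{\mathbf w}\end{bmatrix}\in\mathbb R^{D\times(n+1)}$. The batch semi-gradient SARSA update is $\mathbf w_{\mathrm{SARSA}}(z)=\mathbf w+\frac{\alpha}{n}\sum_{i=0}^{n-1}\delta_i\boldsymbol\phi_i$. *)

theory Defs
  imports "Jordan_Normal_Form.Matrix"
begin

definition emb_dim :: "nat \<Rightarrow> nat" where
  "emb_dim d = 3 * d + 2"

(* The prescribed block P12 in R^{(2d+1) x (d+1)} (0-indexed rows/cols):
   rows 0..d-1  : [0, -I_d];  rows d..2d-1 : [0, I_d];  row 2d : [1, 0] *)
definition P12_blk :: "nat \<Rightarrow> real mat" where
  "P12_blk d = mat (2 * d + 1) (d + 1) (\<lambda>(i, j).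
     if j = 0 then (if i = 2 * d then 1 else 0)
     else if i < d \<and> j = i + 1 then -1
     else if d \<le> i \<and> i < 2 * d \<and> j = i - d + 1 then 1
     else 0)"

definition lsa_out :: "nat \<Rightarrow> real mat \<Rightarrow> real mat \<Rightarrow> real mat \<Rightarrow> real mat" where
  "lsa_out n P V H = H + (1 / real n) \<cdot>\<^sub>m ((V * H) * (transpose_mat H * P * H))"

definition TF :: "nat \<Rightarrow> nat \<Rightarrow> real mat \<Rightarrow> real mat \<Rightarrow> real mat \<Rightarrow> real vec" where
  "TF d n P V H = (let Ho = lsa_out n P V H in
     vec d (\<lambda>k. Ho $$ (dim_row Ho - d + k, dim_col Ho - 1)))"

definition feat :: "('s \<Rightarrow> 'a \<Rightarrow> real vec) \<Rightarrow> (nat \<Rightarrow> 's) \<Rightarrow> (nat \<Rightarrow> 'a) \<Rightarrow> nat \<Rightarrow> real vec" where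
  "feat phi s a i = phi (s i) (a i)"

definition xvec :: "real \<Rightarrow> ('s \<Rightarrow> 'a \<Rightarrow> real vec) \<Rightarrow> (nat \<Rightarrow> 's) \<Rightarrow> (nat \<Rightarrow> 'a)
    \<Rightarrow> (nat \<Rightarrow> real) \<Rightarrow> nat \<Rightarrow> real vec" where
  "xvec \<gamma> phi s a r i =
     feat phi s a i @\<^sub>v (\<gamma> \<cdot>\<^sub>v feat phi s a (Suc i)) @\<^sub>v vec_of_list [r (Suc i)]"

definition prompt :: "nat \<Rightarrow> nat \<Rightarrow> real \<Rightarrow> ('s \<Rightarrow> 'a \<Rightarrow> real vec) \<Rightarrow> real vec
    \<Rightarrow> (nat \<Rightarrow> 's) \<Rightarrow> (nat \<Rightarrow> 'a) \<Rightarrow> (nat \<Rightarrow> real) \<Rightarrow> real mat" where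
  "prompt d n \<gamma> phi w s a r =
     four_block_mat
       (mat_of_cols (2 * d + 1) (map (xvec \<gamma> phi s a r) [0..<n])) (0\<^sub>m (2 * d + 1) 1)
       (0\<^sub>m (d + 1) n) (mat_of_cols (d + 1) [vec_of_list [1] @\<^sub>v w])"

definition td_err :: "real \<Rightarrow> ('s \<Rightarrow> 'a \<Rightarrow> real vec) \<Rightarrow> real vec
    \<Rightarrow> (nat \<Rightarrow> 's) \<Rightarrow> (nat \<Rightarrow> 'a) \<Rightarrow> (nat \<Rightarrow> real) \<Rightarrow> nat \<Rightarrow> real" where
  "td_err \<gamma> phi w s a r i =
     r (Suc i) + \<gamma> * (w \<bullet> feat phi s a (Suc i)) - w \<bullet> feat phi s a i"

definition w_sarsa :: "nat \<Rightarrow> nat \<Rightarrow> real \<Rightarrow> real \<Rightarrow> ('s \<Rightarrow> 'a \<Rightarrow> real vec) \<Rightarrow> real vec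
    \<Rightarrow> (nat \<Rightarrow> 's) \<Rightarrow> (nat \<Rightarrow> 'a) \<Rightarrow> (nat \<Rightarrow> real) \<Rightarrow> real vec" where
  "w_sarsa d n \<alpha> \<gamma> phi w s a r =
     vec d (\<lambda>k. w $ k + \<alpha> / real n *
        (\<Sum>i<n. td_err \<gamma> phi w s a r i * (feat phi s a i $ k)))"

end

theory Submission
  imports Defs
begin

text \<open>
  Scaling \<open>P\<close> by \<open>c\<close> and \<open>V\<close> by \<open>c\<^sup>-\<^sup>1\<close> leaves \<open>(V H)(H\<^sup>T P H)\<close> unchanged, and only the
  last column of the output is read, which is \<open>h + (1/n) V H H\<^sup>T P h\<close> for the query column
  \<open>h = [0; 1; w]\<close>. Since \<open>P\<^sub>2\<^sub>2 = 0\<close>, \<open>P h = [P\<^sub>1\<^sub>2 [1; w]; 0] = [-w; w; 1; 0]\<close>, so \<open>H\<^sup>T P h\<close> lists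
  the TD errors \<open>x\<^sub>i \<bullet> [-w; w; 1] = \<delta>\<^sub>i\<close> followed by \<open>0\<close>, and \<open>H\<close> turns them into
  \<open>[\<Sum>\<^sub>i \<delta>\<^sub>i x\<^sub>i; 0]\<close>. The query block of \<open>H\<close> and all of \<open>V\<^sub>2\<^sub>2\<close> are therefore multiplied by zero,
  and the rows \<open>[\<alpha> I 0 0]\<close> of \<open>V\<^sub>2\<^sub>1\<close> extract \<open>\<alpha> \<Sum>\<^sub>i \<delta>\<^sub>i \<phi>\<^sub>i\<close>.
\<close>

lemma mult_mat_vec_zero_right [simp]:
  "A \<in> carrier_mat nr nc \<Longrightarrow> A *\<^sub>v 0\<^sub>v nc = (0\<^sub>v nr :: 'a :: semiring_0 vec)"
  by (intro eq_vecI) (auto simp: scalar_prod_def)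

lemma zero_mult_mat_vec [simp]:
  "v \<in> carrier_vec nc \<Longrightarrow> 0\<^sub>m nr nc *\<^sub>v v = (0\<^sub>v nr :: 'a :: semiring_0 vec)"
  by (intro eq_vecI) (auto simp: scalar_prod_def)

lemma transpose_mat_of_cols_mult_vec:
  assumes "set xs \<subseteq> carrier_vec m" and "u \<in> carrier_vec m"
  shows "transpose_mat (mat_of_cols m xs) *\<^sub>v u = vec (length xs) (\<lambda>j. xs ! j \<bullet> u)"
  by (rule eq_vecI) (use assms in \<open>auto simp: col_mat_of_cols[of _ _ m] subsetD\<close>)

lemma index_mat_of_cols_mult_vec:
  assumes "i < m" and "t \<in> carrier_vec (length xs)"
  shows "(mat_of_cols m xs *\<^sub>v t) $ i = (\<Sum>j<length xs. xs ! j $ i * t $ j)"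
  using assms by (auto simp: scalar_prod_def row_def mat_of_cols_def atLeast0LessThan mult.commute intro: sum.cong)

lemma index_mult_mat_vec_unit_row:
  assumes "A \<in> carrier_mat nr m" and "i < nr" and "k < m" and "y \<in> carrier_vec m"
    and "\<And>l. l < m \<Longrightarrow> A $$ (i, l) = (if l = k then \<alpha> else 0)"
  shows "(A *\<^sub>v y) $ i = \<alpha> * y $ k"
proof -
  have "(A *\<^sub>v y) $ i = (\<Sum>l<m. A $$ (i, l) * y $ l)"
    using assms by (simp add: scalar_prod_def row_def atLeast0LessThan)
  also have "\<dots> = (\<Sum>l<m. if l = k then \<alpha> * y $ l else 0)"
    using assms by (intro sum.cong) auto
  finally show ?thesis using assms by simp
qed

lemma lsa_out_smult_inverse:
  fixes P V H :: "real mat"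
  assumes P: "P \<in> carrier_mat D D" and V: "V \<in> carrier_mat D D" and H: "H \<in> carrier_mat D N"
    and "c \<noteq> 0"
  shows "lsa_out n (c \<cdot>\<^sub>m P) (inverse c \<cdot>\<^sub>m V) H = lsa_out n P V H"
proof -
  have HT: "transpose_mat H \<in> carrier_mat N D" using H by simp
  have VH: "V * H \<in> carrier_mat D N" and G: "transpose_mat H * P * H \<in> carrier_mat N N"
    using P V H by auto
  have "transpose_mat H * (c \<cdot>\<^sub>m P) * H = c \<cdot>\<^sub>m (transpose_mat H * P * H)"
    using P H HT
    by (simp only: mult_smult_distrib[OF HT P] mult_smult_assoc_mat[of _ N D _ N] mult_carrier_mat)
  moreover have "(inverse c \<cdot>\<^sub>m V) * H = inverse c \<cdot>\<^sub>m (V * H)"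
    using V H by (rule mult_smult_assoc_mat)
  moreover have "(inverse c \<cdot>\<^sub>m (V * H)) * (c \<cdot>\<^sub>m (transpose_mat H * P * H))
      = V * H * (transpose_mat H * P * H)"
    using VH G \<open>c \<noteq> 0\<close> by (intro eq_matI) (auto simp: mult_smult_assoc_mat mult_smult_distrib)
  ultimately show ?thesis
    unfolding lsa_out_def by simp
qed

lemma col_lsa_out:
  assumes P: "P \<in> carrier_mat D D" and V: "V \<in> carrier_mat D D" and H: "H \<in> carrier_mat D N"
    and j: "j < N"
  shows "col (lsa_out n P V H) j
    = col H j + (1 / real n) \<cdot>\<^sub>v (V *\<^sub>v (H *\<^sub>v (transpose_mat H *\<^sub>v (P *\<^sub>v col H j))))"
proof -
  have HTP: "transpose_mat H * P \<in> carrier_mat N D" using H P by simp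
  have "col (V * H * (transpose_mat H * P * H)) j = (V * H) *\<^sub>v col (transpose_mat H * P * H) j"
    using P V H j by (intro col_mult2) auto
  also have "col (transpose_mat H * P * H) j = (transpose_mat H * P) *\<^sub>v col H j"
    using HTP H j by (rule col_mult2)
  finally show ?thesis
    using assms unfolding lsa_out_def by (subst col_add[of _ D N]) auto
qed

lemma col_lsa_out_query:
  fixes X P11 P12 P21 V11 V12 V21 V22 :: "real mat"
  assumes X: "X \<in> carrier_mat m N" and h: "h \<in> carrier_vec k"
    and P11: "P11 \<in> carrier_mat m m" and P12: "P12 \<in> carrier_mat m k"
    and P21: "P21 \<in> carrier_mat k m"
    and V11: "V11 \<in> carrier_mat m m" and V12: "V12 \<in> carrier_mat m k"
    and V21: "V21 \<in> carrier_mat k m" and V22: "V22 \<in> carrier_mat k k"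
  defines "H \<equiv> four_block_mat X (0\<^sub>m m 1) (0\<^sub>m k N) (mat_of_cols k [h])"
    and "y \<equiv> X *\<^sub>v (transpose_mat X *\<^sub>v (P12 *\<^sub>v h))"
  shows "col (lsa_out n (four_block_mat P11 P12 P21 (0\<^sub>m k k)) (four_block_mat V11 V12 V21 V22) H) N
    = (0\<^sub>v m @\<^sub>v h) + (1 / real n) \<cdot>\<^sub>v ((V11 *\<^sub>v y) @\<^sub>v (V21 *\<^sub>v y))"
proof -
  define W where "W = mat_of_cols k [h]"
  define u where "u = P12 *\<^sub>v h"
  have W: "W \<in> carrier_mat k 1" unfolding W_def using mat_of_cols_carrier(1)[of k "[h]"] by simp
  have u: "u \<in> carrier_vec m" unfolding u_def using P12 h by simp
  have H: "H \<in> carrier_mat (m + k) (N + 1)"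
    unfolding H_def W_def[symmetric] using four_block_carrier_mat[OF X W] by simp
  have "col H N = col (0\<^sub>m m 1) 0 @\<^sub>v col W 0"
    unfolding H_def W_def[symmetric] using X W by (subst col_four_block_mat(2)) auto
  also have "\<dots> = 0\<^sub>v m @\<^sub>v h" unfolding W_def using h by simp
  finally have col_H: "col H N = 0\<^sub>v m @\<^sub>v h" .
  have "four_block_mat P11 P12 P21 (0\<^sub>m k k) *\<^sub>v (0\<^sub>v m @\<^sub>v h) = u @\<^sub>v 0\<^sub>v k"
    unfolding u_def using P11 P12 P21 h by (subst four_block_mat_mult_vec) auto
  moreover have "transpose_mat H *\<^sub>v (u @\<^sub>v 0\<^sub>v k) = (transpose_mat X *\<^sub>v u) @\<^sub>v 0\<^sub>v 1"
    unfolding H_def W_def[symmetric] using X W u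
    by (subst transpose_four_block_mat, auto, subst four_block_mat_mult_vec) auto
  moreover have "H *\<^sub>v ((transpose_mat X *\<^sub>v u) @\<^sub>v 0\<^sub>v 1) = y @\<^sub>v 0\<^sub>v k"
    unfolding H_def y_def u_def[symmetric] W_def[symmetric] using X W u
    by (subst four_block_mat_mult_vec) auto
  moreover have "four_block_mat V11 V12 V21 V22 *\<^sub>v (y @\<^sub>v 0\<^sub>v k) = (V11 *\<^sub>v y) @\<^sub>v (V21 *\<^sub>v y)"
    unfolding y_def u_def[symmetric] using X u V11 V12 V21 V22 by (subst four_block_mat_mult_vec) auto
  ultimately show ?thesis
    using P11 V11 V22 H by (simp add: col_lsa_out[of _ "m + k" _ H "N + 1"] col_H)
qed

lemma index_TF:
  assumes "P \<in> carrier_mat D D" and "V \<in> carrier_mat D D" and "H \<in> carrier_mat D (N + 1)"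
    and "k < d" and "d \<le> D"
  shows "TF d n P V H $ k = col (lsa_out n P V H) N $ (D - d + k)"
proof -
  have "lsa_out n P V H \<in> carrier_mat D (N + 1)"
    using assms unfolding lsa_out_def by auto
  then show ?thesis
    unfolding TF_def using assms by simp
qed

lemma P12_blk_carrier: "P12_blk d \<in> carrier_mat (2 * d + 1) (d + 1)"
  unfolding P12_blk_def by simp

lemma P12_blk_mult_vec:
  assumes w: "w \<in> carrier_vec d"
  shows "P12_blk d *\<^sub>v (vec_of_list [1] @\<^sub>v w) = (- w) @\<^sub>v (w @\<^sub>v vec_of_list [1])"
proof (rule eq_vecI)
  fix i assume "i < dim_vec ((- w) @\<^sub>v (w @\<^sub>v vec_of_list [1]))"
  then have i: "i < 2 * d + 1" using w by simp
  have "(P12_blk d *\<^sub>v (vec_of_list [1] @\<^sub>v w)) $ i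
      = (\<Sum>t<Suc d. P12_blk d $$ (i, t) * (vec_of_list [1] @\<^sub>v w) $ t)"
    using i w by (simp add: P12_blk_def scalar_prod_def atLeast0LessThan del: vec_of_list_Cons)
  also have "\<dots> = (if i = 2 * d then 1 else 0) + (\<Sum>t<d.
      if i < d \<and> t = i then - w $ t else if d \<le> i \<and> i < 2 * d \<and> t = i - d then w $ t else 0)"
    using i w by (subst sum.lessThan_Suc_shift) (auto simp: P12_blk_def intro: sum.cong)
  also have "\<dots> = ((- w) @\<^sub>v (w @\<^sub>v vec_of_list [1])) $ i"
  proof -
    consider "i < d" | "d \<le> i" "i < 2 * d" | "i = 2 * d" using i by linarith
    then show ?thesis
      by cases (use w in \<open>auto simp: sum.delta cong: if_cong\<close>)
  qed
  finally show "(P12_blk d *\<^sub>v (vec_of_list [1] @\<^sub>v w)) $ i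
      = ((- w) @\<^sub>v (w @\<^sub>v vec_of_list [1])) $ i" .
qed (use w in \<open>simp add: P12_blk_def\<close>)

lemma xvec_carrier:
  assumes "\<And>x y. phi x y \<in> carrier_vec d"
  shows "xvec \<gamma> phi s a r i \<in> carrier_vec (2 * d + 1)"
proof -
  have "dim_vec (phi x y) = d" for x y using assms by (rule carrier_vecD)
  then show ?thesis unfolding xvec_def feat_def by (intro carrier_vecI) simp
qed

lemma index_xvec_feat:
  assumes "\<And>x y. phi x y \<in> carrier_vec d" and "k < d"
  shows "xvec \<gamma> phi s a r i $ k = feat phi s a i $ k"
proof -
  have "dim_vec (phi x y) = d" for x y using assms(1) by (rule carrier_vecD)
  then show ?thesis unfolding xvec_def feat_def using assms(2) by simp
qed

lemma scalar_prod_xvec_td_err: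
  assumes phi: "\<And>x y. phi x y \<in> carrier_vec d" and w: "w \<in> carrier_vec d"
  shows "xvec \<gamma> phi s a r i \<bullet> ((- w) @\<^sub>v (w @\<^sub>v vec_of_list [1])) = td_err \<gamma> phi w s a r i"
proof -
  have f: "feat phi s a j \<in> carrier_vec d" for j unfolding feat_def by (rule phi)
  have one: "vec_of_list [x] \<in> carrier_vec 1" for x :: real by (rule carrier_vecI) simp
  have "xvec \<gamma> phi s a r i \<bullet> ((- w) @\<^sub>v (w @\<^sub>v vec_of_list [1]))
      = feat phi s a i \<bullet> (- w)
        + ((\<gamma> \<cdot>\<^sub>v feat phi s a (Suc i)) \<bullet> w + vec_of_list [r (Suc i)] \<bullet> vec_of_list [1])"
    unfolding xvec_def using f w one
    by (simp only: scalar_prod_append[of _ d _ "d + 1"] scalar_prod_append[of _ d _ 1]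
        smult_carrier_vec append_carrier_vec uminus_carrier_vec)
  then show ?thesis
    unfolding td_err_def using f w by (simp add: comm_scalar_prod[of w d])
qed

definition xmat :: "nat \<Rightarrow> nat \<Rightarrow> real \<Rightarrow> ('s \<Rightarrow> 'a \<Rightarrow> real vec)
    \<Rightarrow> (nat \<Rightarrow> 's) \<Rightarrow> (nat \<Rightarrow> 'a) \<Rightarrow> (nat \<Rightarrow> real) \<Rightarrow> real mat" where
  "xmat d n \<gamma> phi s a r = mat_of_cols (2 * d + 1) (map (xvec \<gamma> phi s a r) [0..<n])"

lemma xmat_carrier: "xmat d n \<gamma> phi s a r \<in> carrier_mat (2 * d + 1) n"
  unfolding xmat_def by (simp add: mat_of_cols_def)

lemma prompt_four_block:
  "prompt d n \<gamma> phi w s a r = four_block_mat (xmat d n \<gamma> phi s a r)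
     (0\<^sub>m (2 * d + 1) 1) (0\<^sub>m (d + 1) n) (mat_of_cols (d + 1) [vec_of_list [1] @\<^sub>v w])"
  unfolding prompt_def xmat_def ..

lemma prompt_carrier:
  assumes "w \<in> carrier_vec d"
  shows "prompt d n \<gamma> phi w s a r \<in> carrier_mat (3 * d + 2) (n + 1)"
proof -
  have "mat_of_cols (d + 1) [vec_of_list [1] @\<^sub>v w] \<in> carrier_mat (d + 1) 1"
    using mat_of_cols_carrier(1)[of "d + 1" "[vec_of_list [1] @\<^sub>v w]"] by simp
  then show ?thesis
    unfolding prompt_four_block using four_block_carrier_mat[OF xmat_carrier] by fastforce
qed

lemma transpose_xmat_mult_P12_blk:
  assumes phi: "\<And>x y. phi x y \<in> carrier_vec d" and w: "w \<in> carrier_vec d"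
  shows "transpose_mat (xmat d n \<gamma> phi s a r) *\<^sub>v (P12_blk d *\<^sub>v (vec_of_list [1] @\<^sub>v w))
    = vec n (td_err \<gamma> phi w s a r)"
proof -
  have u: "(- w) @\<^sub>v (w @\<^sub>v vec_of_list [1]) \<in> carrier_vec (2 * d + 1)"
    using w by (intro carrier_vecI) simp
  have "transpose_mat (xmat d n \<gamma> phi s a r) *\<^sub>v (P12_blk d *\<^sub>v (vec_of_list [1] @\<^sub>v w))
      = vec n (\<lambda>j. xvec \<gamma> phi s a r j \<bullet> ((- w) @\<^sub>v (w @\<^sub>v vec_of_list [1])))"
    unfolding xmat_def P12_blk_mult_vec[OF w] using u xvec_carrier[OF phi]
    by (subst transpose_mat_of_cols_mult_vec) auto
  also have "\<dots> = vec n (td_err \<gamma> phi w s a r)"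
    by (simp add: scalar_prod_xvec_td_err[OF phi w] del: vec_of_list_Cons)
  finally show ?thesis .
qed

lemma index_xmat_mult_vec:
  assumes "\<And>x y. phi x y \<in> carrier_vec d" and "k < d" and "t \<in> carrier_vec n"
  shows "(xmat d n \<gamma> phi s a r *\<^sub>v t) $ k = (\<Sum>j<n. feat phi s a j $ k * t $ j)"
  unfolding xmat_def using assms
  by (subst index_mat_of_cols_mult_vec) (auto simp: index_xvec_feat[OF assms(1)])

lemma TF_prompt:
  fixes P11 P21 V11 V12 V21 V22 :: "real mat" and n :: nat and \<gamma> :: real
    and s :: "nat \<Rightarrow> 's" and a :: "nat \<Rightarrow> 'a" and r :: "nat \<Rightarrow> real"
  assumes P11: "P11 \<in> carrier_mat (2 * d + 1) (2 * d + 1)"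
    and P21: "P21 \<in> carrier_mat (d + 1) (2 * d + 1)"
    and V11: "V11 \<in> carrier_mat (2 * d + 1) (2 * d + 1)"
    and V12: "V12 \<in> carrier_mat (2 * d + 1) (d + 1)"
    and V21: "V21 \<in> carrier_mat (d + 1) (2 * d + 1)"
    and V22: "V22 \<in> carrier_mat (d + 1) (d + 1)"
    and phi: "\<And>x y. phi x y \<in> carrier_vec d" and w: "w \<in> carrier_vec d"
  defines "y \<equiv> xmat d n \<gamma> phi s a r *\<^sub>v vec n (td_err \<gamma> phi w s a r)"
  shows "TF d n (four_block_mat P11 (P12_blk d) P21 (0\<^sub>m (d + 1) (d + 1)))
      (four_block_mat V11 V12 V21 V22) (prompt d n \<gamma> phi w s a r)
    = vec d (\<lambda>k. w $ k + 1 / real n * (V21 *\<^sub>v y) $ (k + 1))"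
    (is "TF d n ?P ?V ?H = _")
proof -
  define h where "h = vec_of_list [1] @\<^sub>v w"
  have h: "h \<in> carrier_vec (d + 1)" unfolding h_def using w by simp
  have y: "y \<in> carrier_vec (2 * d + 1)" unfolding y_def by (rule mult_mat_vec_carrier[OF xmat_carrier]) simp
  have P: "?P \<in> carrier_mat (3 * d + 2) (3 * d + 2)" using P11 by auto
  have V: "?V \<in> carrier_mat (3 * d + 2) (3 * d + 2)" using V11 V22 by auto
  have H: "?H \<in> carrier_mat (3 * d + 2) (n + 1)" using w by (rule prompt_carrier)
  have "col (lsa_out n ?P ?V ?H) n
      = (0\<^sub>v (2 * d + 1) @\<^sub>v h) + (1 / real n) \<cdot>\<^sub>v ((V11 *\<^sub>v y) @\<^sub>v (V21 *\<^sub>v y))"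
    unfolding prompt_four_block y_def h_def[symmetric]
      transpose_xmat_mult_P12_blk[OF phi w, symmetric, folded h_def]
    using xmat_carrier h P11 P12_blk_carrier P21 V11 V12 V21 V22 by (rule col_lsa_out_query)
  then show ?thesis
    using index_TF[OF P V H] y h V11 V21 by (intro eq_vecI) (auto simp: h_def TF_def Let_def)
qed

theorem theorem1:
  fixes d n :: nat and \<gamma> \<alpha> c :: real
    and P V P11 P21 V11 V12 V21 V22 :: "real mat"
    and phi :: "'s \<Rightarrow> 'a \<Rightarrow> real vec" and w :: "real vec"
    and s :: "nat \<Rightarrow> 's" and a :: "nat \<Rightarrow> 'a" and r :: "nat \<Rightarrow> real"
  assumes "d \<ge> 1" and "n \<ge> 1" and "0 \<le> \<gamma>" and "\<gamma> < 1" and "\<alpha> > 0"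
    and "P11 \<in> carrier_mat (2 * d + 1) (2 * d + 1)"
    and "P21 \<in> carrier_mat (d + 1) (2 * d + 1)"
    and "P = four_block_mat P11 (P12_blk d) P21 (0\<^sub>m (d + 1) (d + 1))"
    and "V11 \<in> carrier_mat (2 * d + 1) (2 * d + 1)"
    and "V12 \<in> carrier_mat (2 * d + 1) (d + 1)"
    and "V21 \<in> carrier_mat (d + 1) (2 * d + 1)"
    and "V22 \<in> carrier_mat (d + 1) (d + 1)"
    and "\<And>k j. k < d \<Longrightarrow> j < 2 * d + 1 \<Longrightarrow> V21 $$ (k + 1, j) = (if j = k then \<alpha> else 0)"
    and "\<And>k j. k < d \<Longrightarrow> j < d + 1 \<Longrightarrow> V22 $$ (k + 1, j) = 0"
    and "V = four_block_mat V11 V12 V21 V22"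
    and "c \<noteq> 0"
    and "\<And>x y. phi x y \<in> carrier_vec d"
    and "w \<in> carrier_vec d"
  shows "TF d n (c \<cdot>\<^sub>m P) (inverse c \<cdot>\<^sub>m V) (prompt d n \<gamma> phi w s a r)
           = w_sarsa d n \<alpha> \<gamma> phi w s a r"
proof -
  note P11 = assms(6) and P21 = assms(7) and P_def = assms(8)
    and V11 = assms(9) and V12 = assms(10) and V21 = assms(11) and V22 = assms(12)
    and V21_rows = assms(13) and V_def = assms(15) and phi = assms(17) and w = assms(18)
  define y where "y = xmat d n \<gamma> phi s a r *\<^sub>v vec n (td_err \<gamma> phi w s a r)"
  have y: "y \<in> carrier_vec (2 * d + 1)" unfolding y_def by (rule mult_mat_vec_carrier[OF xmat_carrier]) simp
  have P: "P \<in> carrier_mat (3 * d + 2) (3 * d + 2)" unfolding P_def using P11 by auto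
  have V: "V \<in> carrier_mat (3 * d + 2) (3 * d + 2)" unfolding V_def using V11 V22 by auto
  have H: "prompt d n \<gamma> phi w s a r \<in> carrier_mat (3 * d + 2) (n + 1)" using w by (rule prompt_carrier)
  have "TF d n (c \<cdot>\<^sub>m P) (inverse c \<cdot>\<^sub>m V) (prompt d n \<gamma> phi w s a r)
      = TF d n P V (prompt d n \<gamma> phi w s a r)"
    using lsa_out_smult_inverse[OF P V H \<open>c \<noteq> 0\<close>] unfolding TF_def by simp
  also have "\<dots> = vec d (\<lambda>k. w $ k + 1 / real n * (V21 *\<^sub>v y) $ (k + 1))"
    unfolding P_def V_def y_def using P11 P21 V11 V12 V21 V22 phi w by (rule TF_prompt)
  also have "\<dots> = w_sarsa d n \<alpha> \<gamma> phi w s a r"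
  proof (rule eq_vecI)
    fix k assume "k < dim_vec (w_sarsa d n \<alpha> \<gamma> phi w s a r)"
    then have k: "k < d" unfolding w_sarsa_def by simp
    have "(V21 *\<^sub>v y) $ (k + 1) = \<alpha> * y $ k"
      using k V21_rows[of k] y by (intro index_mult_mat_vec_unit_row[OF V21]) auto
    also have "y $ k = (\<Sum>j<n. feat phi s a j $ k * td_err \<gamma> phi w s a r j)"
      unfolding y_def using phi k by (subst index_xmat_mult_vec) auto
    finally show "vec d (\<lambda>k. w $ k + 1 / real n * (V21 *\<^sub>v y) $ (k + 1)) $ k
        = w_sarsa d n \<alpha> \<gamma> phi w s a r $ k"
      using k by (simp add: w_sarsa_def mult_ac sum_distrib_left sum_divide_distrib)
  qed (simp add: w_sarsa_def)
  finally show ?thesis .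
qed

end
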